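(* Let $X$ be a uniformly convex Banach space with modulus of convexity $\delta$. If $u_k\rightharpoondown u$ in $X$ and $\|u_k\|\le1$ for all $k$, then $\|u\|<2$ and, for all sufficiently large $k$, $$\|u_k\|\ge\|u_k-u\|+\delta(\|u\|).$$
   Context: $u_k\rightharpoondown u$ (Δ-convergence) means: for every $y\in X$, $\limsup_{k\to\infty}(\|u_k-u\|-\|u_k-y\|)\le0$. The modulus of convexity is $\delta(\epsilon)=\inf\{1-\|\tfrac{x+y}2\|:\|x\|=\|y\|=1,\|x-y\|=\epsilon\}$ for $\epsilon\in[0,2]$, and uniform convexity means $\delta(\epsilon)>0$ for $\epsilon>0$. *)

theory Defs
  imports "HOL-Analysis.Analysis"
begin

definition delta_conv :: "(nat \<Rightarrow> 'a::real_normed_vector) \<Rightarrow> 'a \<Rightarrow> bool" where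
  "delta_conv uk u \<longleftrightarrow>
     (\<forall>y. limsup (\<lambda>k. ereal (norm (uk k - u) - norm (uk k - y))) \<le> 0)"

definition modulus_convexity :: "real \<Rightarrow> 'a::real_normed_vector itself \<Rightarrow> real" where
  "modulus_convexity \<epsilon> _ = Inf {1 - norm ((1/2) *\<^sub>R (x + y)) | x y :: 'a.
        norm x = 1 \<and> norm y = 1 \<and> norm (x - y) = \<epsilon>}"

definition uniformly_convex :: "'a::real_normed_vector itself \<Rightarrow> bool" where
  "uniformly_convex T \<longleftrightarrow> (\<forall>\<epsilon>. 0 < \<epsilon> \<and> \<epsilon> \<le> 2 \<longrightarrow> modulus_convexity \<epsilon> T > 0)"

end

theory Submission
  imports Defs
begin

text \<open>Put \<open>x\<^sub>k = u\<^sub>k - u\<close>, so that \<open>\<parallel>x\<^sub>k + u\<parallel> \<le> 1\<close>. Delta-convergence makes \<open>x\<^sub>k\<close> almost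
  Birkhoff--James orthogonal to \<open>u\<close>: for every \<open>e > 0\<close>, eventually \<open>\<parallel>x\<^sub>k\<parallel> - e \<le> \<parallel>x\<^sub>k + \<rho>u\<parallel>\<close> for
  all \<open>\<rho>\<close> (on a finite grid of \<open>\<rho>\<close> directly, elsewhere by interpolation).

  To bound \<open>\<delta>(\<parallel>u\<parallel>)\<close> from above one needs unit vectors \<open>p\<close> with \<open>\<parallel>p - u\<parallel> = 1\<close> and \<open>\<parallel>p - u/2\<parallel>\<close>
  large. Starting from a pair \<open>(a, b)\<close> with \<open>ax + bu\<close> and \<open>ax + (b - 1)u\<close> in the unit ball, maximise
  \<open>\<mu> \<ge> a\<close> among such pairs \<open>(\<mu>, l)\<close>: at the maximum both points lie on the unit sphere, and almost
  orthogonality gives \<open>\<parallel>p - u/2\<parallel> \<ge> \<mu>(\<parallel>x\<parallel> - e)\<close>, hence \<open>\<delta>(\<parallel>u\<parallel>) \<le> 1 - a(\<parallel>x\<parallel> - e)\<close>. Suitable starting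
  pairs, depending on how \<open>\<parallel>x\<^sub>k\<parallel>\<close> compares with \<open>\<parallel>x\<^sub>k + u\<parallel>\<close> and with \<open>1\<close>, force
  \<open>\<parallel>x\<^sub>k + u\<parallel> \<ge> \<parallel>x\<^sub>k\<parallel> + \<delta>(\<parallel>u\<parallel>)\<close>, and the same construction excludes \<open>\<parallel>u\<parallel> = 2\<close>.

  The assumption \<open>dim X \<ge> 2\<close> enters only through \<open>\<delta>(t) \<le> t/2\<close> and \<open>\<delta>(0) \<le> 0\<close>: on a line the set
  defining \<open>\<delta>(t)\<close> is empty for \<open>0 < t < 2\<close>, and its infimum is a junk value.\<close>

definition chord_region :: "'a::real_normed_vector \<Rightarrow> 'a \<Rightarrow> (real \<times> real) set" where
  "chord_region x u = {(\<mu>, l). 0 \<le> \<mu> \<and> norm (\<mu> *\<^sub>R x + l *\<^sub>R u) \<le> 1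
                                   \<and> norm (\<mu> *\<^sub>R x + (l - 1) *\<^sub>R u) \<le> 1}"

lemma modulus_convexity_le_midpoint:
  fixes p u :: "'a::real_normed_vector"
  assumes "norm p = 1" "norm (p - u) = 1"
  shows "modulus_convexity (norm u) TYPE('a) \<le> 1 - norm (p - (1/2) *\<^sub>R u)"
proof -
  let ?S = "{1 - norm ((1/2) *\<^sub>R (x + y)) | x y :: 'a.
        norm x = 1 \<and> norm y = 1 \<and> norm (x - y) = norm u}"
  have "(1/2) *\<^sub>R (p + (p - u)) = p - (1/2) *\<^sub>R u"
    by (simp add: algebra_simps flip: scaleR_add_left)
  then have mem: "1 - norm (p - (1/2) *\<^sub>R u) \<in> ?S"
    using assms by (intro CollectI exI[of _ p] exI[of _ "p - u"]) auto
  have "bdd_below ?S"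
  proof (rule bdd_belowI[of _ 0], clarify)
    fix x y :: 'a assume "norm x = 1" "norm y = 1"
    then show "0 \<le> 1 - norm ((1/2) *\<^sub>R (x + y))"
      using norm_triangle_ineq[of x y] by simp
  qed
  then show ?thesis
    unfolding modulus_convexity_def using cInf_lower[OF mem] by blast
qed

lemma modulus_convexity_zero_le:
  assumes "(x::'a::real_normed_vector) \<noteq> 0"
  shows "modulus_convexity 0 TYPE('a) \<le> 0"
proof -
  define p where "p = (1 / norm x) *\<^sub>R x"
  have "norm p = 1" using assms by (simp add: p_def)
  then show ?thesis
    using modulus_convexity_le_midpoint[of p 0] by simp
qed

lemma norm_scaleR_add_ge:
  fixes x u :: "'a::real_normed_vector"
  assumes "\<forall>\<rho>. m \<le> norm (x + \<rho> *\<^sub>R u)" and "0 \<le> \<mu>" "0 \<le> m"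
  shows "\<mu> * m \<le> norm (\<mu> *\<^sub>R x + l *\<^sub>R u)"
proof (cases "\<mu> = 0")
  case False
  then have "\<mu> > 0" using assms by simp
  then have "\<mu> *\<^sub>R x + l *\<^sub>R u = \<mu> *\<^sub>R (x + (l/\<mu>) *\<^sub>R u)"
    by (simp add: algebra_simps)
  then have "norm (\<mu> *\<^sub>R x + l *\<^sub>R u) = \<mu> * norm (x + (l/\<mu>) *\<^sub>R u)"
    using \<open>\<mu> > 0\<close> by simp
  then show ?thesis using assms \<open>\<mu> > 0\<close> by (simp add: mult_left_mono)
qed simp

lemma chord_region_neg:
  "(\<mu>, l) \<in> chord_region x (- u) \<longleftrightarrow> (\<mu>, 1 - l) \<in> chord_region x u"
proof -
  have "\<mu> *\<^sub>R x + l *\<^sub>R - u = \<mu> *\<^sub>R x + (1 - l - 1) *\<^sub>R u"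
    "\<mu> *\<^sub>R x + (l - 1) *\<^sub>R - u = \<mu> *\<^sub>R x + (1 - l) *\<^sub>R u"
    by (simp_all add: algebra_simps)
  then show ?thesis unfolding chord_region_def mem_Collect_eq case_prod_conv by auto
qed

lemma compact_chord_region:
  fixes x u :: "'a::real_normed_vector"
  assumes "u \<noteq> 0" "0 < m" "\<forall>\<rho>. m \<le> norm (x + \<rho> *\<^sub>R u)"
  shows "compact (chord_region x u)"
proof -
  define B where "B = (1 + norm x / m) / norm u"
  have "fst z \<le> 1/m \<and> \<bar>snd z\<bar> \<le> B" if "z \<in> chord_region x u" for z
  proof -
    obtain \<mu> l where z: "z = (\<mu>, l)" by fastforce
    have \<mu>: "0 \<le> \<mu>" and nz: "norm (\<mu> *\<^sub>R x + l *\<^sub>R u) \<le> 1"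
      using that by (auto simp: chord_region_def z)
    have "\<mu> * m \<le> 1" using norm_scaleR_add_ge[OF assms(3) \<mu>, of l] assms(2) nz by linarith
    then have \<mu>m: "\<mu> \<le> 1/m" using assms(2) by (simp add: field_simps)
    have "\<bar>l\<bar> * norm u \<le> norm (\<mu> *\<^sub>R x + l *\<^sub>R u) + norm (\<mu> *\<^sub>R x)"
      using norm_triangle_ineq4[of "\<mu> *\<^sub>R x + l *\<^sub>R u" "\<mu> *\<^sub>R x"] by simp
    also have "\<dots> \<le> 1 + norm x / m"
      using nz \<mu> mult_right_mono[OF \<mu>m norm_ge_zero[of x]] by simp
    finally have "\<bar>l\<bar> \<le> B" using assms(1) by (simp add: B_def field_simps)
    then show ?thesis using \<mu>m z by simp
  qed
  then have "chord_region x u \<subseteq> cbox (0, -B) (1/m, B)"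
    by (force simp: cbox_Pair_eq chord_region_def)
  then have "bounded (chord_region x u)" using bounded_cbox bounded_subset by blast
  moreover have "closed (chord_region x u)"
    unfolding chord_region_def case_prod_unfold
    by (intro closed_Collect_conj closed_Collect_le continuous_intros)
  ultimately show ?thesis using compact_eq_bounded_closed by blast
qed

lemma chord_region_extend:
  fixes x u :: "'a::real_normed_vector"
  assumes "0 \<le> \<mu>" "0 < b"
    and "norm (\<mu> *\<^sub>R x + l *\<^sub>R u) \<le> 1 - b" "norm (\<mu> *\<^sub>R x + (l - 1) *\<^sub>R u) \<le> 1 - b"
  shows "\<exists>\<eta>>0. (\<mu> + \<eta>, l) \<in> chord_region x u"
proof -
  define \<eta> where "\<eta> = b / (norm x + 1)"
  have \<eta>: "\<eta> > 0" using assms(2) by (simp add: \<eta>_def add_nonneg_pos)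
  have "\<eta> * norm x \<le> \<eta> * (norm x + 1)" using \<eta> by simp
  also have "\<dots> = b" using add_nonneg_pos[OF norm_ge_zero[of x] zero_less_one]
    by (simp add: \<eta>_def)
  finally have \<eta>x: "norm (\<eta> *\<^sub>R x) \<le> b" using \<eta> by simp
  have "norm ((\<mu> + \<eta>) *\<^sub>R x + k *\<^sub>R u) \<le> 1" if "norm (\<mu> *\<^sub>R x + k *\<^sub>R u) \<le> 1 - b" for k
    using norm_triangle_ineq[of "\<mu> *\<^sub>R x + k *\<^sub>R u" "\<eta> *\<^sub>R x"] that \<eta>x
    by (simp add: algebra_simps)
  then show ?thesis using assms \<eta> by (intro exI[of _ \<eta>]) (simp add: chord_region_def)
qed

text \<open>Otherwise a small shift of \<open>l\<close> moves both ends into the open unit ball, and then \<open>\<mu>\<close> can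
  still be increased.\<close>
lemma chord_region_max_norm_eq_one:
  fixes x u :: "'a::real_normed_vector"
  assumes "u \<noteq> 0" "(\<mu>, l) \<in> chord_region x u" and max: "\<forall>z\<in>chord_region x u. fst z \<le> \<mu>"
  shows "norm (\<mu> *\<^sub>R x + l *\<^sub>R u) = 1"
proof (rule ccontr)
  define p where "p = \<mu> *\<^sub>R x + l *\<^sub>R u"
  define c where "c = 1 - norm p"
  have \<mu>: "0 \<le> \<mu>" and np: "norm p \<le> 1" and nq: "norm (p - u) \<le> 1"
    using assms(2) by (auto simp: chord_region_def p_def algebra_simps)
  assume "norm (\<mu> *\<^sub>R x + l *\<^sub>R u) \<noteq> 1"
  then have c: "0 < c" using np by (simp add: p_def c_def)
  define \<epsilon> where "\<epsilon> = min (1/2) (c / (2 * norm u))"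
  have \<epsilon>: "0 < \<epsilon>" "\<epsilon> < 1" using c assms(1) by (auto simp: \<epsilon>_def)
  have "\<epsilon> * norm u \<le> c / (2 * norm u) * norm u"
    using assms(1) by (intro mult_right_mono) (auto simp: \<epsilon>_def)
  then have "norm (\<epsilon> *\<^sub>R u) \<le> c / 2" using assms(1) \<epsilon> by simp
  then have "norm (p + \<epsilon> *\<^sub>R u) \<le> 1 - c / 2"
    using norm_triangle_ineq[of p "\<epsilon> *\<^sub>R u"] c_def by linarith
  moreover have "\<mu> *\<^sub>R x + (l + \<epsilon>) *\<^sub>R u = p + \<epsilon> *\<^sub>R u" by (simp add: p_def algebra_simps)
  ultimately have n1: "norm (\<mu> *\<^sub>R x + (l + \<epsilon>) *\<^sub>R u) \<le> 1 - c / 2"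
    by simp
  have "norm ((1 - \<epsilon>) *\<^sub>R (p - u) + \<epsilon> *\<^sub>R p) \<le> (1 - \<epsilon>) * norm (p - u) + \<epsilon> * norm p"
    using norm_triangle_ineq[of "(1 - \<epsilon>) *\<^sub>R (p - u)" "\<epsilon> *\<^sub>R p"] \<epsilon> by simp
  also have "\<dots> \<le> (1 - \<epsilon>) * 1 + \<epsilon> * (1 - c)"
    using nq \<epsilon> c_def by (intro add_mono mult_left_mono) auto
  moreover have "\<mu> *\<^sub>R x + (l + \<epsilon> - 1) *\<^sub>R u = (1 - \<epsilon>) *\<^sub>R (p - u) + \<epsilon> *\<^sub>R p"
    by (simp add: p_def algebra_simps)
  ultimately have n2: "norm (\<mu> *\<^sub>R x + (l + \<epsilon> - 1) *\<^sub>R u) \<le> 1 - \<epsilon> * c"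
    by (simp add: algebra_simps)
  define b where "b = min (c / 2) (\<epsilon> * c)"
  have "0 < b" "norm (\<mu> *\<^sub>R x + (l + \<epsilon>) *\<^sub>R u) \<le> 1 - b"
    "norm (\<mu> *\<^sub>R x + (l + \<epsilon> - 1) *\<^sub>R u) \<le> 1 - b"
    using n1 n2 c \<epsilon> by (auto simp: b_def)
  then obtain \<eta> where "\<eta> > 0" "(\<mu> + \<eta>, l + \<epsilon>) \<in> chord_region x u"
    using chord_region_extend[OF \<mu>] by blast
  then show False using max by force
qed

lemma exists_unit_chord:
  fixes x u :: "'a::real_normed_vector"
  assumes "u \<noteq> 0" "0 < m" and orth: "\<forall>\<rho>. m \<le> norm (x + \<rho> *\<^sub>R u)"
    and "(a, b) \<in> chord_region x u"
  obtains p where "norm p = 1" "norm (p - u) = 1" "a * m \<le> norm (p - (1/2) *\<^sub>R u)"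
proof -
  obtain z where z: "z \<in> chord_region x u" and max: "\<forall>y\<in>chord_region x u. fst y \<le> fst z"
    using continuous_attains_sup[OF compact_chord_region[OF assms(1-3)] _
        continuous_on_fst[OF continuous_on_id]] assms(4) by blast
  obtain \<mu> l where zz: "z = (\<mu>, l)" by fastforce
  have \<mu>: "0 \<le> \<mu>" "a \<le> \<mu>" using z max assms(4) by (force simp: zz chord_region_def)+
  have "fst y \<le> \<mu>" if "y \<in> chord_region x (- u)" for y
    using max that chord_region_neg[of "fst y" "snd y"] by (force simp: zz)
  moreover have "(\<mu>, 1 - l) \<in> chord_region x (- u)" using z by (simp add: zz chord_region_neg)
  ultimately have "norm (\<mu> *\<^sub>R x + (1 - l) *\<^sub>R - u) = 1"
    using chord_region_max_norm_eq_one[of "- u"] assms(1) by auto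
  then have q: "norm (\<mu> *\<^sub>R x + (l - 1) *\<^sub>R u) = 1"
    by (simp add: algebra_simps)
  define p where "p = \<mu> *\<^sub>R x + l *\<^sub>R u"
  have "norm p = 1"
    using chord_region_max_norm_eq_one[OF assms(1)] z max by (simp add: zz p_def)
  moreover have "norm (p - u) = 1" using q by (simp add: p_def algebra_simps)
  moreover have "p - (1/2) *\<^sub>R u = \<mu> *\<^sub>R x + (l - 1/2) *\<^sub>R u" by (simp add: p_def algebra_simps)
  then have "\<mu> * m \<le> norm (p - (1/2) *\<^sub>R u)"
    using norm_scaleR_add_ge[OF orth \<mu>(1)] assms(2) by simp
  then have "a * m \<le> norm (p - (1/2) *\<^sub>R u)"
    using mult_right_mono[OF \<mu>(2), of m] assms(2) by linarith
  ultimately show ?thesis using that by blast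
qed

lemma exists_vector_off_line:
  fixes u :: "'a::real_normed_vector"
  assumes "\<exists>x y :: 'a. x \<noteq> 0 \<and> (\<forall>c. y \<noteq> c *\<^sub>R x)"
  obtains w where "\<forall>\<rho>. w + \<rho> *\<^sub>R u \<noteq> 0"
proof -
  obtain x y :: 'a where x: "x \<noteq> 0" and y: "\<forall>c. y \<noteq> c *\<^sub>R x" using assms by blast
  show ?thesis
  proof (cases "\<exists>c. x = c *\<^sub>R u")
    case True
    then obtain c where c: "x = c *\<^sub>R u" by blast
    then have "c \<noteq> 0" using x by auto
    have "y + \<rho> *\<^sub>R u \<noteq> 0" for \<rho>
    proof
      assume "y + \<rho> *\<^sub>R u = 0"
      then have "y = (- \<rho> / c) *\<^sub>R x" using c \<open>c \<noteq> 0\<close> by (simp add: eq_neg_iff_add_eq_0[symmetric])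
      then show False using y by blast
    qed
    then show ?thesis using that by blast
  next
    case False
    have "x + \<rho> *\<^sub>R u \<noteq> 0" for \<rho>
    proof
      assume "x + \<rho> *\<^sub>R u = 0"
      then have "x = (- \<rho>) *\<^sub>R u" by (simp add: eq_neg_iff_add_eq_0[symmetric])
      then show False using False by blast
    qed
    then show ?thesis using that by blast
  qed
qed

lemma exists_norm_bounded_below_on_line:
  fixes u w :: "'a::real_normed_vector"
  assumes "u \<noteq> 0" "\<forall>\<rho>. w + \<rho> *\<^sub>R u \<noteq> 0"
  obtains m where "0 < m" "\<forall>\<rho>. m \<le> norm (w + \<rho> *\<^sub>R u)"
proof -
  define R where "R = 2 * norm w / norm u"
  have R: "0 \<le> R" by (simp add: R_def)
  have cont: "continuous_on {-R..R} (\<lambda>\<rho>. norm (w + \<rho> *\<^sub>R u))"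
    by (intro continuous_intros)
  obtain \<rho>\<^sub>0 where min: "\<forall>\<rho>\<in>{-R..R}. norm (w + \<rho>\<^sub>0 *\<^sub>R u) \<le> norm (w + \<rho> *\<^sub>R u)"
    using continuous_attains_inf[OF compact_Icc _ cont] R by auto
  define m where "m = norm (w + \<rho>\<^sub>0 *\<^sub>R u)"
  have "m \<le> norm w" using min[rule_format, of 0] R by (simp add: m_def)
  have "m \<le> norm (w + \<rho> *\<^sub>R u)" for \<rho>
  proof (cases "\<rho> \<in> {-R..R}")
    case False
    then have "R * norm u \<le> \<bar>\<rho>\<bar> * norm u" by (intro mult_right_mono) auto
    moreover have "R * norm u = 2 * norm w" using assms(1) by (simp add: R_def)
    ultimately have "2 * norm w \<le> \<bar>\<rho>\<bar> * norm u" by simp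
    also have "\<dots> \<le> norm (w + \<rho> *\<^sub>R u) + norm w"
      using norm_triangle_ineq4[of "w + \<rho> *\<^sub>R u" w] by simp
    finally show ?thesis using \<open>m \<le> norm w\<close> by linarith
  qed (use min m_def in simp)
  moreover have "0 < m" using assms(2) by (simp add: m_def)
  ultimately show ?thesis using that by blast
qed

lemma modulus_convexity_le_half:
  fixes u :: "'a::real_normed_vector"
  assumes "\<exists>x y :: 'a. x \<noteq> 0 \<and> (\<forall>c. y \<noteq> c *\<^sub>R x)" "u \<noteq> 0" "norm u \<le> 2"
  shows "modulus_convexity (norm u) TYPE('a) \<le> norm u / 2"
proof -
  obtain w where "\<forall>\<rho>. w + \<rho> *\<^sub>R u \<noteq> 0" using exists_vector_off_line[OF assms(1)] .
  then obtain m where m: "0 < m" "\<forall>\<rho>. m \<le> norm (w + \<rho> *\<^sub>R u)"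
    using exists_norm_bounded_below_on_line[OF assms(2)] by blast
  have "(0, 1/2) \<in> chord_region w u" using assms(3) by (simp add: chord_region_def)
  then obtain p where "norm p = 1" "norm (p - u) = 1"
    using exists_unit_chord[OF assms(2) m] by blast
  then show ?thesis
    using modulus_convexity_le_midpoint[of p u] norm_triangle_ineq2[of p "(1/2) *\<^sub>R u"] by simp
qed

definition almost_orthogonal :: "real \<Rightarrow> 'a::real_normed_vector \<Rightarrow> 'a \<Rightarrow> bool" where
  "almost_orthogonal e x u \<longleftrightarrow> (\<forall>\<rho>. norm x - e \<le> norm (x + \<rho> *\<^sub>R u))"

lemma almost_orthogonalD: "almost_orthogonal e x u \<Longrightarrow> norm x - e \<le> norm (x + \<rho> *\<^sub>R u)"
  by (simp add: almost_orthogonal_def)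

lemma modulus_convexity_le_chord:
  fixes x u :: "'a::real_normed_vector"
  assumes "u \<noteq> 0" "almost_orthogonal e x u" "e < norm x" "0 \<le> a"
    and "norm (a *\<^sub>R x + b *\<^sub>R u) \<le> 1" "norm (a *\<^sub>R x + (b - 1) *\<^sub>R u) \<le> 1"
  shows "modulus_convexity (norm u) TYPE('a) \<le> 1 - a * (norm x - e)"
proof -
  have "(a, b) \<in> chord_region x u" using assms(4-6) by (simp add: chord_region_def)
  moreover have "\<forall>\<rho>. norm x - e \<le> norm (x + \<rho> *\<^sub>R u)" "0 < norm x - e"
    using assms(2,3) by (simp_all add: almost_orthogonal_def)
  ultimately obtain p where "norm p = 1" "norm (p - u) = 1" "a * (norm x - e) \<le> norm (p - (1/2) *\<^sub>R u)"
    using exists_unit_chord[OF assms(1)] by blast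
  then show ?thesis using modulus_convexity_le_midpoint[of p u] by linarith
qed

text \<open>Use the chord from \<open>x/\<parallel>x\<parallel>\<close> to \<open>x/\<parallel>x\<parallel> + u\<close>; its second end is a convex combination of
  \<open>x/\<parallel>x\<parallel>\<close> and \<open>x + u\<close>.\<close>
lemma modulus_convexity_le_of_norm_add_less:
  fixes x u :: "'a::real_normed_vector"
  assumes "u \<noteq> 0" "almost_orthogonal e x u" "e < norm x" "norm x \<le> 1" "norm (x + u) < norm x"
  shows "modulus_convexity (norm u) TYPE('a) \<le> e / norm x"
proof -
  define c where "c = norm x"
  have "0 \<le> e" using almost_orthogonalD[OF assms(2), of 0] by simp
  then have c: "0 < c" using assms(3) unfolding c_def by linarith
  define y where "y = (1/c) *\<^sub>R x"
  have "c *\<^sub>R y = x" using c by (simp add: y_def)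
  then have eq: "y + 1 *\<^sub>R u = (1 - c) *\<^sub>R y + (x + u)" by (simp add: algebra_simps)
  have "norm y = 1" using c by (simp add: y_def c_def)
  then have "norm ((1 - c) *\<^sub>R y + (x + u)) \<le> (1 - c) + norm (x + u)"
    using norm_triangle_ineq[of "(1 - c) *\<^sub>R y" "x + u"] assms(4) by (simp add: c_def)
  then have "norm (y + 1 *\<^sub>R u) \<le> (1 - c) + norm (x + u)" unfolding eq .
  then have "norm (y + 1 *\<^sub>R u) \<le> 1" using assms(5) unfolding c_def by linarith
  moreover have "norm (y + (1 - 1) *\<^sub>R u) \<le> 1" using c by (simp add: c_def y_def)
  ultimately have "modulus_convexity (norm u) TYPE('a) \<le> 1 - (1/c) * (c - e)"
    using modulus_convexity_le_chord[OF assms(1-3), of "1/c" 1] c unfolding y_def by (simp add: c_def)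
  also have "\<dots> = e / c" using c by (simp add: field_simps)
  finally show ?thesis by (simp add: c_def)
qed

text \<open>The weight \<open>\<theta>\<close> is chosen so that both ends \<open>(1 - \<theta>)x + (1 - \<theta>/2)w\<close> and \<open>(1 - \<theta>)x - (\<theta>/2)w\<close>
  of the chord have norm at most \<open>(1 - \<theta>)(1 + e) + \<theta>\<parallel>w\<parallel>/2 = 1\<close>.\<close>
lemma modulus_convexity_le_of_norm_ge_one:
  fixes x w :: "'a::real_normed_vector"
  assumes "w \<noteq> 0" "almost_orthogonal e x w" "0 < e" "e < 1" "norm w < 2"
    and "1 \<le> norm x" "norm x \<le> 1 + e" "norm (x + w) \<le> 1 + e"
  shows "modulus_convexity (norm w) TYPE('a) \<le> e / (1 + e - norm w / 2) + e"
proof -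
  define \<theta> where "\<theta> = e / (1 + e - norm w / 2)"
  have den: "0 < 1 + e - norm w / 2" using assms(3,5) by simp
  have \<theta>: "0 \<le> \<theta>" "\<theta> \<le> 1" using assms(3,5) den by (simp_all add: \<theta>_def divide_le_eq_1_pos)
  have "(1 - \<theta>) * (1 + e) + \<theta> / 2 * norm w = 1 + e - \<theta> * (1 + e - norm w / 2)"
    by (simp add: field_simps)
  also have "\<theta> * (1 + e - norm w / 2) = e" using den by (simp add: \<theta>_def)
  finally have bound: "(1 - \<theta>) * (1 + e) + \<theta> / 2 * norm w = 1" by simp
  have "(1 - \<theta>) *\<^sub>R (x + w) + (\<theta>/2) *\<^sub>R w = (1 - \<theta>) *\<^sub>R x + ((1 - \<theta>) + \<theta>/2) *\<^sub>R w"
    by (simp only: scaleR_add_right scaleR_add_left add.assoc)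
  then have "(1 - \<theta>) *\<^sub>R x + (1 - \<theta>/2) *\<^sub>R w = (1 - \<theta>) *\<^sub>R (x + w) + (\<theta>/2) *\<^sub>R w"
    by simp
  moreover have "norm ((1 - \<theta>) *\<^sub>R (x + w) + (\<theta>/2) *\<^sub>R w) \<le> (1 - \<theta>) * norm (x + w) + \<theta> / 2 * norm w"
    using norm_triangle_ineq[of "(1 - \<theta>) *\<^sub>R (x + w)" "(\<theta>/2) *\<^sub>R w"] \<theta> by simp
  moreover have "(1 - \<theta>) * norm (x + w) \<le> (1 - \<theta>) * (1 + e)"
    using \<theta> assms(8) by (simp add: mult_left_mono)
  ultimately have n1: "norm ((1 - \<theta>) *\<^sub>R x + (1 - \<theta>/2) *\<^sub>R w) \<le> 1" using bound by simp
  have "norm ((1 - \<theta>) *\<^sub>R x + (- (\<theta>/2)) *\<^sub>R w) \<le> (1 - \<theta>) * norm x + \<theta> / 2 * norm w"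
    using norm_triangle_ineq[of "(1 - \<theta>) *\<^sub>R x" "(- (\<theta>/2)) *\<^sub>R w"] \<theta> by simp
  moreover have "(1 - \<theta>) * norm x \<le> (1 - \<theta>) * (1 + e)"
    using \<theta> assms(7) by (simp add: mult_left_mono)
  ultimately have n2: "norm ((1 - \<theta>) *\<^sub>R x + (1 - \<theta>/2 - 1) *\<^sub>R w) \<le> 1" using bound by simp
  have "modulus_convexity (norm w) TYPE('a) \<le> 1 - (1 - \<theta>) * (norm x - e)"
    using modulus_convexity_le_chord[OF assms(1,2) _ _ n1 n2] assms(4,6) \<theta> by simp
  also have "\<dots> \<le> 1 - (1 - \<theta>) * (1 - e)"
    using assms(6) \<theta> by (intro diff_left_mono mult_left_mono) auto
  also have "\<dots> \<le> \<theta> + e" using \<theta> assms(3) by (simp add: algebra_simps)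
  finally show ?thesis by (simp add: \<theta>_def)
qed

text \<open>With \<open>D = \<parallel>x + u\<parallel> - \<parallel>x\<parallel>\<close> and \<open>\<alpha> = D / (2\<parallel>x + u\<parallel>)\<close>, the chord ends are
  \<open>(1 + \<nu>)x + (1 - \<alpha>)u = (1 - \<alpha>)(x + u) + (\<alpha> + \<nu>)x\<close> and \<open>(1 + \<nu>)x - \<alpha>u = (1 + \<nu> + \<alpha>)x - \<alpha>(x + u)\<close>,
  where \<open>\<nu> \<ge> 0\<close> is chosen to put both on the unit sphere.\<close>
lemma modulus_convexity_le_of_norm_le_norm_add:
  fixes x u :: "'a::real_normed_vector"
  assumes "u \<noteq> 0" "almost_orthogonal e x u" "0 < e" "e < norm x"
    and "norm x \<le> norm (x + u)" "norm (x + u) \<le> 1"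
  defines "D \<equiv> norm (x + u) - norm x"
  shows "modulus_convexity (norm u) TYPE('a) \<le> D - D\<^sup>2 / 2 + e / norm x"
proof -
  define c r where "c = norm x" and "r = norm (x + u)"
  have c: "0 < c" using assms(3,4) unfolding c_def by linarith
  have D: "0 \<le> D" "D \<le> r" "D = r - c" using assms(5) c by (simp_all add: D_def c_def r_def)
  have r: "0 < r" "r \<le> 1" using assms(5,6) c unfolding c_def r_def by linarith+
  define \<alpha> where "\<alpha> = D / (2 * r)"
  have \<alpha>: "0 \<le> \<alpha>" "\<alpha> \<le> 1/2" "\<alpha> * (2 * r) = D" using D r by (simp_all add: \<alpha>_def field_simps)
  define \<nu> where "\<nu> = (1 - r + \<alpha> * D) / c"
  have \<nu>: "0 \<le> \<nu>" "\<nu> * c = 1 - r + \<alpha> * D" using r \<alpha> D c by (simp_all add: \<nu>_def)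
  have "(1 + \<nu>) *\<^sub>R x + (1 - \<alpha>) *\<^sub>R u = (1 - \<alpha>) *\<^sub>R (x + u) + (\<alpha> + \<nu>) *\<^sub>R x"
    by (simp add: algebra_simps)
  moreover have "norm ((1 - \<alpha>) *\<^sub>R (x + u) + (\<alpha> + \<nu>) *\<^sub>R x) \<le> (1 - \<alpha>) * r + (\<alpha> + \<nu>) * c"
    using norm_triangle_ineq[of "(1 - \<alpha>) *\<^sub>R (x + u)" "(\<alpha> + \<nu>) *\<^sub>R x"] \<alpha> \<nu>
    by (simp add: r_def c_def)
  moreover have "(1 - \<alpha>) * r + (\<alpha> + \<nu>) * c = 1" using \<nu> D by (simp add: algebra_simps)
  ultimately have n1: "norm ((1 + \<nu>) *\<^sub>R x + (1 - \<alpha>) *\<^sub>R u) \<le> 1" by simp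
  have "(1 + \<nu>) *\<^sub>R x + (1 - \<alpha> - 1) *\<^sub>R u = (1 + \<nu> + \<alpha>) *\<^sub>R x - \<alpha> *\<^sub>R (x + u)"
    by (simp add: algebra_simps)
  moreover have "norm ((1 + \<nu> + \<alpha>) *\<^sub>R x - \<alpha> *\<^sub>R (x + u)) \<le> (1 + \<nu> + \<alpha>) * c + \<alpha> * r"
    using norm_triangle_ineq4[of "(1 + \<nu> + \<alpha>) *\<^sub>R x" "\<alpha> *\<^sub>R (x + u)"] \<alpha> \<nu>
    by (simp add: r_def c_def)
  moreover have "(1 + \<nu> + \<alpha>) * c + \<alpha> * r = 1" using \<nu> \<alpha> D by (simp add: algebra_simps)
  ultimately have n2: "norm ((1 + \<nu>) *\<^sub>R x + (1 - \<alpha> - 1) *\<^sub>R u) \<le> 1" by simp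
  have "modulus_convexity (norm u) TYPE('a) \<le> 1 - (1 + \<nu>) * (c - e)"
    using modulus_convexity_le_chord[OF assms(1,2,4) _ n1 n2] \<nu> by (simp add: c_def)
  also have "\<dots> = 1 - c - \<nu> * c + (1 + \<nu>) * e" by (simp add: algebra_simps)
  also have "\<dots> = D - \<alpha> * D + (1 + \<nu>) * e" using \<nu>(2) D(3) by linarith
  finally have "modulus_convexity (norm u) TYPE('a) \<le> D - \<alpha> * D + (1 + \<nu>) * e" .
  moreover have "D\<^sup>2 / 2 \<le> \<alpha> * D"
  proof -
    have "D\<^sup>2 / 2 \<le> D\<^sup>2 / (2 * r)" using r by (intro divide_left_mono) auto
    then show ?thesis by (simp add: \<alpha>_def power2_eq_square)
  qed
  moreover have "(1 + \<nu>) * e \<le> e / c"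
  proof -
    have "\<alpha> * D \<le> D" using \<alpha> D by (simp add: mult_left_le_one_le)
    then have "(1 + \<nu>) * c \<le> 1" using \<nu>(2) D(3) by (simp add: algebra_simps)
    then have "(1 + \<nu>) * c * (e / c) \<le> e / c"
      using c assms(3) \<nu>(1) by (intro mult_left_le_one_le) auto
    then show ?thesis using c by simp
  qed
  ultimately show ?thesis unfolding c_def by linarith
qed

lemma le_of_le_diff_half_square:
  fixes d D s :: real
  assumes "0 \<le> d" "d \<le> D - D\<^sup>2 / 2 + s" "s \<le> d / 2" "s \<le> d\<^sup>2 / 8"
  shows "d \<le> D"
proof -
  have "d / 2 \<le> D"
  proof (rule ccontr)
    assume "\<not> d / 2 \<le> D"
    moreover have "0 \<le> D\<^sup>2" by simp
    ultimately show False using assms(2,3) by linarith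
  qed
  then have "(d / 2)\<^sup>2 \<le> D\<^sup>2" using assms(1) by (intro power_mono) auto
  then have "d\<^sup>2 / 4 \<le> D\<^sup>2" by (simp add: power_divide)
  then show ?thesis using assms(2,4) by linarith
qed

lemma norm_add_ge_modulus_convexity:
  fixes x u :: "'a::real_normed_vector"
  defines "d \<equiv> modulus_convexity (norm u) TYPE('a)"
  assumes "u \<noteq> 0" "norm u < 2" "norm (x + u) \<le> 1" "almost_orthogonal e x u"
    and "0 < d" "d \<le> norm u / 2"
    and "0 < e" "e \<le> norm u / 8" "e \<le> norm u * d\<^sup>2 / 32" "e \<le> d * (1 - norm u / 2) / 4"
  shows "norm x + d \<le> norm (x + u)"
proof -
  define t c r where "t = norm u" and "c = norm x" and "r = norm (x + u)"
  have tri: "t \<le> r + c" unfolding t_def r_def c_def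
    using norm_triangle_ineq4[of "x + u" x] by simp
  have "c \<le> r + e" using almost_orthogonalD[OF assms(5), of 1] by (simp add: c_def r_def)
  show ?thesis
  proof (cases "c \<le> t / 4")
    case True
    then show ?thesis using tri assms(7) by (simp add: t_def c_def r_def)
  next
    case False
    have t: "0 < t" using assms(2) by (simp add: t_def)
    have ec: "e < c" using False assms(9) t unfolding t_def by linarith
    have "e / c \<le> e / (t / 4)" using False assms(8) t by (intro divide_left_mono) auto
    also have "\<dots> \<le> d\<^sup>2 / 8" using assms(10) t by (simp add: t_def field_simps)
    finally have ed2: "e / c \<le> d\<^sup>2 / 8" .
    have "d < 1" using assms(3,7) by simp
    then have "d\<^sup>2 \<le> d" using assms(6) by (simp add: power2_eq_square mult_left_le_one_le)
    then have ed: "e / c \<le> d / 2" using ed2 assms(6) by linarith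
    consider "c \<le> r" | "r < c" "c \<le> 1" | "r < c" "1 < c" by linarith
    then show ?thesis
    proof cases
      case 1
      have "d \<le> (r - c) - (r - c)\<^sup>2 / 2 + e / c"
        using modulus_convexity_le_of_norm_le_norm_add[OF assms(2,5,8)] ec 1 assms(4)
        by (simp add: d_def c_def r_def)
      then have "d \<le> r - c"
        using le_of_le_diff_half_square[OF less_imp_le[OF assms(6)] _ ed ed2] by blast
      then show ?thesis by (simp add: c_def r_def)
    next
      case 2
      then have "d \<le> e / c"
        using modulus_convexity_le_of_norm_add_less[OF assms(2,5)] ec by (simp add: d_def c_def r_def)
      then show ?thesis using ed assms(6) by linarith
    next
      case 3
      have "d \<le> e / (1 + e - t / 2) + e"
        using modulus_convexity_le_of_norm_ge_one[OF assms(2,5,8)] 3 assms(3,4,9) ec \<open>c \<le> r + e\<close> t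
        by (simp add: d_def t_def c_def r_def)
      moreover have "e / (1 + e - t / 2) \<le> e / (1 - t / 2)"
        using assms(3,8) by (intro divide_left_mono) (auto simp: t_def)
      moreover have "e / (1 - t / 2) \<le> d / 4" using assms(3,11) by (simp add: t_def field_simps)
      moreover have "d * (1 - t / 2) \<le> d" using assms(6) t by (simp add: mult_left_le)
      then have "e \<le> d / 4" using assms(11) by (simp add: t_def)
      ultimately show ?thesis using assms(6) by linarith
    qed
  qed
qed

lemma not_almost_orthogonal_norm_two:
  fixes x u :: "'a::real_normed_vector"
  assumes "norm u = 2" "norm (x + u) \<le> 1" "almost_orthogonal e x u"
    and "0 < e" "e \<le> 1/2" "4 * e \<le> modulus_convexity 1 TYPE('a)"
  shows False
proof -
  define v where "v = (1/2) *\<^sub>R u"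
  have v: "norm v = 1" "v \<noteq> 0" using assms(1) by (auto simp: v_def)
  have "2 \<le> norm (x + u) + norm x"
    using assms(1) norm_triangle_ineq4[of "x + u" x] by simp
  then have "1 \<le> norm x" using assms(2) by linarith
  have "norm x \<le> norm (x + u) + e" using almost_orthogonalD[OF assms(3), of 1] by simp
  have "almost_orthogonal e x v"
    using assms(3) by (auto simp: almost_orthogonal_def v_def)
  have "(1/2) *\<^sub>R x + (1/2) *\<^sub>R x = x"
    by (metis field_sum_of_halves scaleR_add_left scaleR_one)
  moreover have "(1/2) *\<^sub>R (x + u) + (1/2) *\<^sub>R x = ((1/2) *\<^sub>R x + (1/2) *\<^sub>R x) + (1/2) *\<^sub>R u"
    by (simp only: scaleR_add_right add_ac)
  ultimately have "x + v = (1/2) *\<^sub>R (x + u) + (1/2) *\<^sub>R x" by (simp add: v_def)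
  then have "norm (x + v) \<le> (1/2) * norm (x + u) + (1/2) * norm x"
    using norm_triangle_ineq[of "(1/2) *\<^sub>R (x + u)" "(1/2) *\<^sub>R x"] by simp
  then have "modulus_convexity 1 TYPE('a) \<le> e / (1 + e - 1 / 2) + e"
    using modulus_convexity_le_of_norm_ge_one[OF v(2) \<open>almost_orthogonal e x v\<close> assms(4)]
      v(1) assms(2,5) \<open>1 \<le> norm x\<close> \<open>norm x \<le> norm (x + u) + e\<close> by simp
  also have "e / (1 + e - 1 / 2) \<le> e / (1 / 2)" using assms(4) by (intro divide_left_mono) auto
  finally show False using assms(4,6) by simp
qed

lemma delta_conv_eventually_less:
  fixes uk :: "nat \<Rightarrow> 'a::real_normed_vector"
  assumes "delta_conv uk u" "0 < e"
  shows "\<forall>\<^sub>F k in sequentially. norm (uk k - u) - norm (uk k - y) < e"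
proof -
  have "limsup (\<lambda>k. ereal (norm (uk k - u) - norm (uk k - y))) \<le> 0"
    using assms(1) by (simp add: delta_conv_def)
  also have "\<dots> < ereal e" using assms(2) by simp
  finally have "\<forall>\<^sub>F k in sequentially. ereal (norm (uk k - u) - norm (uk k - y)) < ereal e"
    by (rule Limsup_lessD)
  then show ?thesis by simp
qed

text \<open>Almost orthogonality on the grid \<open>{j h | j = -N..N}\<close> spreads to all \<open>\<rho>\<close>: between grid points
  the norm moves by at most \<open>h \<parallel>u\<parallel>\<close>, and beyond the grid it exceeds \<open>\<parallel>x\<parallel>\<close> anyway.\<close>
lemma almost_orthogonal_of_grid:
  fixes x u :: "'a::real_normed_vector"
  assumes "0 < h" "2 * norm x \<le> real N * h * norm u"
    and grid: "\<forall>j\<in>{- int N..int N}. norm x - e \<le> norm (x + (of_int j * h) *\<^sub>R u)"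
  shows "almost_orthogonal (e + h * norm u) x u"
  unfolding almost_orthogonal_def
proof
  fix \<rho>
  show "norm x - (e + h * norm u) \<le> norm (x + \<rho> *\<^sub>R u)"
  proof (cases "\<bar>\<rho>\<bar> \<le> real N * h")
    case True
    define j where "j = \<lfloor>\<rho> / h\<rfloor>"
    have "of_int j \<le> \<rho> / h" "\<rho> / h < of_int j + 1" unfolding j_def by linarith+
    then have j: "of_int j * h \<le> \<rho>" "\<rho> - of_int j * h \<le> h"
      using assms(1) by (simp_all add: field_simps)
    have "- real N \<le> \<rho> / h" "\<rho> / h \<le> real N"
      using True assms(1) by (simp_all add: field_simps abs_le_iff)
    then have "j \<in> {- int N..int N}" unfolding j_def
      by (auto intro: floor_le_iff[THEN iffD2] le_floor_iff[THEN iffD2])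
    then have "norm x - e \<le> norm (x + (of_int j * h) *\<^sub>R u)" using grid by blast
    also have "\<dots> \<le> norm (x + \<rho> *\<^sub>R u) + norm ((\<rho> - of_int j * h) *\<^sub>R u)"
      using norm_triangle_ineq4[of "x + \<rho> *\<^sub>R u" "(\<rho> - of_int j * h) *\<^sub>R u"]
      by (simp add: algebra_simps)
    also have "norm ((\<rho> - of_int j * h) *\<^sub>R u) \<le> h * norm u"
      using j by (simp add: mult_right_mono)
    finally show ?thesis by linarith
  next
    case False
    then have "real N * h * norm u \<le> \<bar>\<rho>\<bar> * norm u" by (simp add: mult_right_mono)
    also have "\<dots> \<le> norm (x + \<rho> *\<^sub>R u) + norm x"
      using norm_triangle_ineq4[of "x + \<rho> *\<^sub>R u" x] by simp
    finally have "norm x \<le> norm (x + \<rho> *\<^sub>R u)" using assms(2) by linarith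
    moreover have "0 \<le> e" using grid[rule_format, of 0] by simp
    moreover have "0 \<le> h * norm u" using \<open>0 < h\<close> by simp
    ultimately show ?thesis by linarith
  qed
qed

lemma delta_conv_eventually_almost_orthogonal:
  fixes uk :: "nat \<Rightarrow> 'a::real_normed_vector"
  assumes "delta_conv uk u" "\<And>k. norm (uk k) \<le> 1" "0 < e"
  shows "\<forall>\<^sub>F k in sequentially. almost_orthogonal e (uk k - u) u"
proof (cases "u = 0")
  case True
  then show ?thesis using assms(3) by (simp add: almost_orthogonal_def)
next
  case False
  define t where "t = norm u"
  have t: "0 < t" using False by (simp add: t_def)
  define h where "h = e / (2 * t)"
  have h: "0 < h" "h * t = e / 2" using t assms(3) by (simp_all add: h_def)
  define N where "N = nat \<lceil>2 * (1 + t) / (t * h)\<rceil>"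
  have "2 * (1 + t) / (t * h) \<le> real N" unfolding N_def by linarith
  then have "2 * (1 + t) / (t * h) * (t * h) \<le> real N * (t * h)"
    using t h by (intro mult_right_mono) auto
  moreover have "2 * (1 + t) / (t * h) * (t * h) = 2 * (1 + t)" using t h by simp
  ultimately have "2 * (1 + t) \<le> real N * (t * h)" by metis
  then have N: "2 * (1 + t) \<le> real N * h * t" by (simp only: ac_simps)
  have "\<forall>\<^sub>F k in sequentially. \<forall>j\<in>{- int N..int N}.
      norm (uk k - u) - e / 2 \<le> norm (uk k - u + (of_int j * h) *\<^sub>R u)"
  proof (intro eventually_ball_finite ballI)
    fix j :: int
    have eq: "uk k - (u - (of_int j * h) *\<^sub>R u) = uk k - u + (of_int j * h) *\<^sub>R u" for k
      by (simp add: algebra_simps)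
    have "\<forall>\<^sub>F k in sequentially. norm (uk k - u) - norm (uk k - u + (of_int j * h) *\<^sub>R u) < e / 2"
      using delta_conv_eventually_less[OF assms(1), of "e / 2" "u - (of_int j * h) *\<^sub>R u"] assms(3)
      unfolding eq by simp
    then show "\<forall>\<^sub>F k in sequentially. norm (uk k - u) - e / 2 \<le> norm (uk k - u + (of_int j * h) *\<^sub>R u)"
      by (rule eventually_mono) linarith
  qed simp
  then show ?thesis
  proof (rule eventually_mono)
    fix k
    assume grid: "\<forall>j\<in>{- int N..int N}. norm (uk k - u) - e / 2 \<le> norm (uk k - u + (of_int j * h) *\<^sub>R u)"
    have "norm (uk k - u) \<le> 1 + t"
      using norm_triangle_ineq4[of "uk k" u] assms(2)[of k] by (simp add: t_def)
    then have "2 * norm (uk k - u) \<le> real N * h * norm u" using N by (simp add: t_def)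
    then have "almost_orthogonal (e / 2 + h * t) (uk k - u) u"
      using almost_orthogonal_of_grid[OF h(1) _ grid] by (simp add: t_def)
    moreover have "e / 2 + h * t = e" using h(2) by simp
    ultimately show "almost_orthogonal e (uk k - u) u" by simp
  qed
qed

lemma delta_conv_norm_less_two:
  fixes uk :: "nat \<Rightarrow> 'a::real_normed_vector"
  assumes "uniformly_convex TYPE('a)" "delta_conv uk u" "\<And>k. norm (uk k) \<le> 1"
  shows "norm u < 2"
proof -
  have almost: "\<exists>k. almost_orthogonal e (uk k - u) u \<and> norm (uk k - u + u) \<le> 1" if "0 < e" for e
    using delta_conv_eventually_almost_orthogonal[OF assms(2,3) that] assms(3)
    unfolding eventually_sequentially by auto
  have "norm u \<le> 2 + e" if e: "0 < e" for e
  proof -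
    obtain k where k: "almost_orthogonal e (uk k - u) u" "norm (uk k - u + u) \<le> 1"
      using almost[OF e] by blast
    have "norm u \<le> norm (uk k - u + u) + norm (uk k - u)"
      using norm_triangle_ineq4[of "uk k - u + u" "uk k - u"] by simp
    also have "norm (uk k - u) \<le> norm (uk k - u + u) + e"
      using almost_orthogonalD[OF k(1), of 1] by simp
    finally show ?thesis using k(2) by linarith
  qed
  then have "norm u \<le> 2" by (rule field_le_epsilon)
  moreover have "norm u \<noteq> 2"
  proof
    assume "norm u = 2"
    define e where "e = min (1/2) (modulus_convexity 1 TYPE('a) / 4)"
    have "0 < e" using assms(1) by (simp add: e_def uniformly_convex_def)
    then obtain k where k: "almost_orthogonal e (uk k - u) u" "norm (uk k - u + u) \<le> 1"
      using almost by blast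
    have "e \<le> 1/2" "4 * e \<le> modulus_convexity 1 TYPE('a)" by (simp_all add: e_def)
    then show False
      using not_almost_orthogonal_norm_two[OF \<open>norm u = 2\<close> k(2,1) \<open>0 < e\<close>] by blast
  qed
  ultimately show ?thesis by simp
qed

theorem lemma3p7:
  fixes uk :: "nat \<Rightarrow> 'a::banach" and u :: 'a
  assumes dim2: "\<exists>x y :: 'a. x \<noteq> 0 \<and> (\<forall>c. y \<noteq> c *\<^sub>R x)"
    and uc: "uniformly_convex TYPE('a)"
    and conv: "delta_conv uk u"
    and bnd: "\<And>k. norm (uk k) \<le> 1"
  shows "norm u < 2 \<and>
    (\<forall>\<^sub>F k in sequentially. norm (uk k) \<ge> norm (uk k - u) + modulus_convexity (norm u) TYPE('a))"
proof (cases "u = 0")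
  case True
  then show ?thesis using dim2 modulus_convexity_zero_le by fastforce
next
  case False
  define d where "d = modulus_convexity (norm u) TYPE('a)"
  have u2: "norm u < 2" using delta_conv_norm_less_two[OF uc conv bnd] .
  have d: "0 < d" "d \<le> norm u / 2"
    using uc False u2 modulus_convexity_le_half[OF dim2 False]
    by (simp_all add: d_def uniformly_convex_def)
  define e where "e = min (norm u / 8) (min (norm u * d\<^sup>2 / 32) (d * (1 - norm u / 2) / 4))"
  have "0 < e" using False d u2 by (simp add: e_def)
  moreover have "e \<le> norm u / 8" "e \<le> norm u * d\<^sup>2 / 32" "e \<le> d * (1 - norm u / 2) / 4"
    unfolding e_def by (meson min.cobounded1 min.cobounded2 order_trans)+
  ultimately have e: "0 < e" "e \<le> norm u / 8" "e \<le> norm u * d\<^sup>2 / 32" "e \<le> d * (1 - norm u / 2) / 4"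
    by blast+
  have "\<forall>\<^sub>F k in sequentially. norm (uk k - u) + d \<le> norm (uk k - u + u)"
    using delta_conv_eventually_almost_orthogonal[OF conv bnd e(1)]
  proof (rule eventually_mono)
    fix k
    assume "almost_orthogonal e (uk k - u) u"
    moreover have "norm (uk k - u + u) \<le> 1" using bnd[of k] by simp
    ultimately show "norm (uk k - u) + d \<le> norm (uk k - u + u)"
      using norm_add_ge_modulus_convexity[OF False u2] d e unfolding d_def by blast
  qed
  then show ?thesis using u2 by (simp add: d_def)
qed

end
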